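(* Let $m,n\ge 3$ be integers and fix a vertex $u$ of ${\rm SR}(m,n)$. Then every neighbour $v$ of $u$ lies in at most two maximal cliques of the subgraph induced on the set of neighbours of $u$ (equivalently, in at most two maximal cliques of ${\rm SR}(m,n)$ containing both $u$ and $v$) if and only if $u$ has exactly one nonzero coordinate.
   Context: ${\rm SR}(m,n)$ is the graph whose vertices are the vectors in $\{0,1,2,\dots\}^m$ with coordinate sum $n$, two vertices being adjacent when they differ in precisely two coordinate positions. *)

theory Defs
  imports Main
begin

text \<open>Vertices of SR(m,n): vectors in nat^m (coordinates indexed by 0..m-1,
  represented as functions nat => nat that vanish outside {..<m}) with coordinate sum n.\<close>
definition SR_verts :: "nat \<Rightarrow> nat \<Rightarrow> (nat \<Rightarrow> nat) set" where
  "SR_verts m n = {x. (\<forall>i\<ge>m. x i = 0) \<and> (\<Sum>i<m. x i) = n}"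

definition SR_adj :: "nat \<Rightarrow> (nat \<Rightarrow> nat) \<Rightarrow> (nat \<Rightarrow> nat) \<Rightarrow> bool" where
  "SR_adj m x y \<longleftrightarrow> card {i. i < m \<and> x i \<noteq> y i} = 2"

definition SR_nbrs :: "nat \<Rightarrow> nat \<Rightarrow> (nat \<Rightarrow> nat) \<Rightarrow> (nat \<Rightarrow> nat) set" where
  "SR_nbrs m n u = {v \<in> SR_verts m n. SR_adj m u v}"

definition is_clique_in :: "('a \<Rightarrow> 'a \<Rightarrow> bool) \<Rightarrow> 'a set \<Rightarrow> 'a set \<Rightarrow> bool" where
  "is_clique_in E S C \<longleftrightarrow> C \<subseteq> S \<and> (\<forall>x\<in>C. \<forall>y\<in>C. x \<noteq> y \<longrightarrow> E x y)"

definition is_max_clique_in :: "('a \<Rightarrow> 'a \<Rightarrow> bool) \<Rightarrow> 'a set \<Rightarrow> 'a set \<Rightarrow> bool" where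
  "is_max_clique_in E S C \<longleftrightarrow> is_clique_in E S C \<and>
     (\<forall>D. is_clique_in E S D \<and> C \<subseteq> D \<longrightarrow> D = C)"

end

theory Submission
  imports Defs
begin

text \<open>Write \<open>n e\<^sub>p\<close> for the vertex with all its mass in coordinate \<open>p\<close>. Its neighbours are
  the vectors \<open>(n - a) e\<^sub>p + a e\<^sub>i\<close> with \<open>i \<noteq> p\<close> and \<open>1 \<le> a \<le> n\<close>, and two of them are adjacent
  iff they share \<open>i\<close> or share \<open>a\<close>. So every clique through a neighbour \<open>v\<close> lies in the
  "row" of \<open>v\<close> (same \<open>i\<close>) or in its "column" (same \<open>a\<close>), and these are the only two maximal
  cliques through \<open>v\<close>.

  If \<open>u\<close> has two nonzero coordinates \<open>j, l\<close>, pick a third coordinate \<open>i\<close>. The neighbour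
  \<open>v = u - e\<^sub>j + e\<^sub>i\<close> of \<open>u\<close> has three pairwise non-adjacent neighbours inside the
  neighbourhood of \<open>u\<close>: \<open>u - e\<^sub>j + e\<^sub>l\<close>, \<open>u - e\<^sub>l + e\<^sub>i\<close>, and either \<open>u - e\<^sub>i + e\<^sub>j\<close> (if
  \<open>u\<^sub>i \<noteq> 0\<close>) or \<open>u - 2e\<^sub>j + 2e\<^sub>i\<close> (if \<open>u\<^sub>j \<ge> 2\<close>; since \<open>n \<ge> 3\<close> one of \<open>j, l\<close> can play
  this role). Extending the three edges at \<open>v\<close> to maximal cliques gives three distinct
  maximal cliques through \<open>v\<close>.\<close>

lemma clique_extends_to_max_clique:
  assumes "finite S" and "is_clique_in E S K"
  shows "\<exists>M. is_max_clique_in E S M \<and> K \<subseteq> M"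
proof -
  let ?F = "{D. is_clique_in E S D \<and> K \<subseteq> D}"
  have fin_F: "finite ?F"
    by (rule finite_subset[of _ "Pow S"]) (use assms in \<open>auto simp: is_clique_in_def\<close>)
  have "K \<in> ?F" using assms by auto
  then have "Max (card ` ?F) \<in> card ` ?F" using fin_F by (intro Max_in) auto
  then obtain D where D: "D \<in> ?F" "card D = Max (card ` ?F)" by auto
  have "is_max_clique_in E S D"
    unfolding is_max_clique_in_def
  proof (intro conjI allI impI)
    show "is_clique_in E S D" using D by auto
    fix D' assume D': "is_clique_in E S D' \<and> D \<subseteq> D'"
    then have "card D' \<le> card D" using D fin_F by auto
    moreover have "finite D'" using D' assms by (auto simp: is_clique_in_def intro: finite_subset)
    ultimately show "D' = D" using D' by (metis card_seteq)
  qed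
  then show ?thesis using D by auto
qed

lemma three_le_card_max_cliques_containing:
  assumes "finite S" and sym: "\<And>a b. E a b \<Longrightarrow> E b a"
    and S: "v \<in> S" "x \<in> S" "y \<in> S" "z \<in> S" and adj: "E v x" "E v y" "E v z"
    and distinct: "x \<noteq> y" "x \<noteq> z" "y \<noteq> z" "v \<noteq> x" "v \<noteq> y" "v \<noteq> z"
    and nonadj: "\<not> E x y" "\<not> E x z" "\<not> E y z"
  shows "3 \<le> card {C. is_max_clique_in E S C \<and> v \<in> C}"
proof -
  have edge: "is_clique_in E S {v, w}" if "w \<in> S" "E v w" for w
    using that S sym by (auto simp: is_clique_in_def)
  obtain M1 where M1: "is_max_clique_in E S M1" "{v, x} \<subseteq> M1"
    using clique_extends_to_max_clique[OF \<open>finite S\<close> edge[OF S(2) adj(1)]] by blast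
  obtain M2 where M2: "is_max_clique_in E S M2" "{v, y} \<subseteq> M2"
    using clique_extends_to_max_clique[OF \<open>finite S\<close> edge[OF S(3) adj(2)]] by blast
  obtain M3 where M3: "is_max_clique_in E S M3" "{v, z} \<subseteq> M3"
    using clique_extends_to_max_clique[OF \<open>finite S\<close> edge[OF S(4) adj(3)]] by blast
  have "M1 \<noteq> M2" using M1 M2 distinct nonadj by (auto simp: is_max_clique_in_def is_clique_in_def)
  moreover have "M1 \<noteq> M3" using M1 M3 distinct nonadj by (auto simp: is_max_clique_in_def is_clique_in_def)
  moreover have "M2 \<noteq> M3" using M2 M3 distinct nonadj by (auto simp: is_max_clique_in_def is_clique_in_def)
  ultimately have "card {M1, M2, M3} = 3" by auto
  moreover have "{M1, M2, M3} \<subseteq> {C. is_max_clique_in E S C \<and> v \<in> C}" using M1 M2 M3 by auto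
  moreover have "finite {C. is_max_clique_in E S C \<and> v \<in> C}"
    by (rule finite_subset[of _ "Pow S"])
      (use \<open>finite S\<close> in \<open>auto simp: is_max_clique_in_def is_clique_in_def\<close>)
  ultimately show ?thesis by (metis card_mono)
qed

lemma finite_SR_verts: "finite (SR_verts m n)"
proof -
  let ?B = "{f. \<forall>x. (x \<in> {..<m} \<longrightarrow> f x \<in> {..n}) \<and> (x \<notin> {..<m} \<longrightarrow> f x = 0)}"
  have "SR_verts m n \<subseteq> ?B"
  proof
    fix f assume f: "f \<in> SR_verts m n"
    have "f x \<le> n" if "x < m" for x
      using f member_le_sum[of x "{..<m}" f] that by (auto simp: SR_verts_def)
    with f show "f \<in> ?B" by (auto simp: SR_verts_def)
  qed
  moreover have "finite ?B" by (rule finite_set_of_finite_funs) auto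
  ultimately show ?thesis by (rule finite_subset)
qed

lemma finite_SR_nbrs: "finite (SR_nbrs m n u)"
  using finite_SR_verts unfolding SR_nbrs_def by auto

lemma SR_adj_commute: "SR_adj m x y \<longleftrightarrow> SR_adj m y x"
proof -
  have "{i. i < m \<and> x i \<noteq> y i} = {i. i < m \<and> y i \<noteq> x i}" by auto
  then show ?thesis by (simp add: SR_adj_def)
qed

lemma SR_adj_if_differ_at_two:
  "{k. k < m \<and> x k \<noteq> y k} = {a, b} \<Longrightarrow> a \<noteq> b \<Longrightarrow> SR_adj m x y \<and> x \<noteq> y"
  by (auto simp: SR_adj_def)

lemma not_SR_adj_if_differ_at_three:
  "{k. k < m \<and> x k \<noteq> y k} = {a, b, c} \<Longrightarrow> a \<noteq> b \<Longrightarrow> a \<noteq> c \<Longrightarrow> b \<noteq> c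
   \<Longrightarrow> \<not> SR_adj m x y \<and> x \<noteq> y"
  by (auto simp: SR_adj_def)

lemma sum_lessThan_remove_two:
  fixes f :: "nat \<Rightarrow> 'a::comm_monoid_add"
  assumes "i < m" "j < m" "i \<noteq> j"
  shows "(\<Sum>k<m. f k) = f j + f i + (\<Sum>k\<in>{..<m} - {j} - {i}. f k)"
proof -
  have "(\<Sum>k<m. f k) = f j + (\<Sum>k\<in>{..<m} - {j}. f k)" using assms by (intro sum.remove) auto
  also have "(\<Sum>k\<in>{..<m} - {j}. f k) = f i + (\<Sum>k\<in>{..<m} - {j} - {i}. f k)"
    using assms by (intro sum.remove) auto
  finally show ?thesis by (simp add: add.assoc)
qed

definition transfer :: "(nat \<Rightarrow> nat) \<Rightarrow> nat \<Rightarrow> nat \<Rightarrow> nat \<Rightarrow> nat \<Rightarrow> nat" where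
  "transfer u j i a = u(j := u j - a, i := u i + a)"

lemma transfer_in_SR_nbrs:
  assumes u: "u \<in> SR_verts m n" and "i < m" "j < m" "i \<noteq> j" "1 \<le> a" "a \<le> u j"
  shows "transfer u j i a \<in> SR_nbrs m n u"
proof -
  have "(\<Sum>k<m. transfer u j i a k)
      = transfer u j i a j + transfer u j i a i + (\<Sum>k\<in>{..<m} - {j} - {i}. transfer u j i a k)"
    using assms by (intro sum_lessThan_remove_two) auto
  also have "(\<Sum>k\<in>{..<m} - {j} - {i}. transfer u j i a k) = (\<Sum>k\<in>{..<m} - {j} - {i}. u k)"
    by (rule sum.cong) (auto simp: transfer_def)
  also have "transfer u j i a j + transfer u j i a i = u j + u i"
    using assms by (simp add: transfer_def)
  also have "u j + u i + (\<Sum>k\<in>{..<m} - {j} - {i}. u k) = (\<Sum>k<m. u k)"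
    using assms by (intro sum_lessThan_remove_two[symmetric]) auto
  finally have "transfer u j i a \<in> SR_verts m n"
    using u assms by (auto simp: SR_verts_def transfer_def)
  moreover have "SR_adj m u (transfer u j i a)"
    by (rule SR_adj_if_differ_at_two[of m _ _ i j, THEN conjunct1])
      (use assms in \<open>auto simp: transfer_def\<close>)
  ultimately show ?thesis by (simp add: SR_nbrs_def)
qed

definition unit_vertex :: "nat \<Rightarrow> nat \<Rightarrow> nat \<Rightarrow> nat" where
  "unit_vertex p n = (\<lambda>k. if k = p then n else 0)"

lemma unit_vertex_in_SR_verts: "p < m \<Longrightarrow> unit_vertex p n \<in> SR_verts m n"
  by (simp add: SR_verts_def unit_vertex_def)

lemma transfer_unit_vertex:
  "i \<noteq> p \<Longrightarrow> transfer (unit_vertex p n) p i a = (\<lambda>k. if k = p then n - a else if k = i then a else 0)"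
  by (auto simp: transfer_def unit_vertex_def)

lemma card_support_eq_1_iff_unit_vertex:
  assumes "u \<in> SR_verts m n" "n \<ge> 1"
  shows "card {i. i < m \<and> u i \<noteq> 0} = 1 \<longleftrightarrow> (\<exists>p<m. u = unit_vertex p n)"
proof
  assume "card {i. i < m \<and> u i \<noteq> 0} = 1"
  then obtain p where supp: "{i. i < m \<and> u i \<noteq> 0} = {p}" by (rule card_1_singletonE)
  have zero: "u k = 0" if "k \<noteq> p" for k
    using supp that assms(1) by (cases "k < m") (auto simp: SR_verts_def)
  have "p < m" using supp by blast
  then have "(\<Sum>i<m. u i) = u p" by (subst sum.mono_neutral_right[of "{..<m}" "{p}"]) (auto simp: zero)
  then have "u = unit_vertex p n" using assms(1) zero by (auto simp: SR_verts_def unit_vertex_def)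
  then show "\<exists>p<m. u = unit_vertex p n" using \<open>p < m\<close> by blast
next
  assume "\<exists>p<m. u = unit_vertex p n"
  then obtain p where "p < m" "u = unit_vertex p n" by blast
  then have "{i. i < m \<and> u i \<noteq> 0} = {p}" using assms(2) by (auto simp: unit_vertex_def)
  then show "card {i. i < m \<and> u i \<noteq> 0} = 1" by simp
qed

lemma SR_nbrs_unit_vertex:
  assumes "p < m" and w: "w \<in> SR_nbrs m n (unit_vertex p n)"
  obtains i a where "i < m" "i \<noteq> p" "1 \<le> a" "a \<le> n" "w = transfer (unit_vertex p n) p i a"
proof -
  let ?D = "{k. k < m \<and> unit_vertex p n k \<noteq> w k}"
  have w_zero: "\<forall>k\<ge>m. w k = 0" and w_sum: "(\<Sum>k<m. w k) = n"
    using w by (auto simp: SR_nbrs_def SR_verts_def)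
  have "card ?D = 2" using w by (auto simp: SR_nbrs_def SR_adj_def)
  then obtain a b where D: "?D = {a, b}" "a \<noteq> b" by (auto simp: card_2_iff)
  have "w p \<noteq> n"
  proof
    assume "w p = n"
    then have "(\<Sum>k\<in>{..<m} - {p}. w k) = 0" using w_sum \<open>p < m\<close> by (simp add: sum.remove)
    then have "?D = {}" using \<open>w p = n\<close> by (auto simp: unit_vertex_def)
    then show False using D by simp
  qed
  then have "p \<in> ?D" using \<open>p < m\<close> by (simp add: unit_vertex_def)
  then have "p \<in> {a, b}" by (simp only: D(1))
  then obtain i where i: "i \<noteq> p" "?D = {p, i}" using D by (metis insert_commute insertE singletonD)
  then have "i \<in> ?D" by blast
  then have "i < m" "w i \<noteq> 0" using i(1) by (simp_all add: unit_vertex_def)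
  have zero: "w k = 0" if "k \<noteq> p" "k \<noteq> i" for k
  proof (cases "k < m")
    case True
    then have "k \<notin> ?D" using i that by blast
    then show ?thesis using True that by (simp add: unit_vertex_def)
  qed (use w_zero in simp)
  have "(\<Sum>k<m. w k) = (\<Sum>k\<in>{p, i}. w k)"
    by (rule sum.mono_neutral_right) (use \<open>p < m\<close> \<open>i < m\<close> zero in auto)
  then have "w p + w i = n" using w_sum i(1) by simp
  then have "w = transfer (unit_vertex p n) p i (w i)"
    using zero i(1) by (auto simp: transfer_unit_vertex)
  then show ?thesis
    using that[of i "w i"] \<open>i < m\<close> i(1) \<open>w i \<noteq> 0\<close> \<open>w p + w i = n\<close> by auto
qed

lemma SR_adj_transfer_unit_vertex:
  assumes "i < m" "i' < m" "i \<noteq> p" "i' \<noteq> p" "1 \<le> a" "a \<le> n" "1 \<le> a'" "a' \<le> n" "p < m"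
  shows "SR_adj m (transfer (unit_vertex p n) p i a) (transfer (unit_vertex p n) p i' a')
     \<longleftrightarrow> (i = i' \<and> a \<noteq> a') \<or> (i \<noteq> i' \<and> a = a')"
proof -
  let ?D = "{k. k < m \<and> transfer (unit_vertex p n) p i a k \<noteq> transfer (unit_vertex p n) p i' a' k}"
  consider "i = i'" "a = a'" | "i = i'" "a \<noteq> a'" | "i \<noteq> i'" "a = a'" | "i \<noteq> i'" "a \<noteq> a'"
    by blast
  then show ?thesis
  proof cases
    case 1
    then show ?thesis by (simp add: SR_adj_def)
  next
    case 2
    then have "?D = {p, i}" using assms by (auto simp: transfer_unit_vertex)
    then show ?thesis using 2 assms by (simp add: SR_adj_def)
  next
    case 3
    then have "?D = {i, i'}" using assms by (auto simp: transfer_unit_vertex)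
    then show ?thesis using 3 assms by (simp add: SR_adj_def)
  next
    case 4
    then have "?D = {p, i, i'}" using assms by (auto simp: transfer_unit_vertex)
    then show ?thesis using 4 assms by (simp add: SR_adj_def)
  qed
qed

lemma clique_through_transfer_unit_vertex:
  assumes "p < m" and i: "i < m" "i \<noteq> p" "1 \<le> a" "a \<le> n"
    and C: "is_clique_in (SR_adj m) (SR_nbrs m n (unit_vertex p n)) C"
    and v: "transfer (unit_vertex p n) p i a \<in> C"
  shows "C \<subseteq> transfer (unit_vertex p n) p i ` {1..n}
       \<or> C \<subseteq> (\<lambda>j. transfer (unit_vertex p n) p j a) ` {j. j < m \<and> j \<noteq> p}"
proof (rule ccontr)
  let ?T = "transfer (unit_vertex p n) p"
  have adj: "SR_adj m x y" if "x \<in> C" "y \<in> C" "x \<noteq> y" for x y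
    using C that by (auto simp: is_clique_in_def)
  have nbr: "x \<in> SR_nbrs m n (unit_vertex p n)" if "x \<in> C" for x
    using C that by (auto simp: is_clique_in_def)
  assume "\<not> ?thesis"
  then obtain w1 w2 where w: "w1 \<in> C" "w1 \<notin> ?T i ` {1..n}"
    "w2 \<in> C" "w2 \<notin> (\<lambda>j. ?T j a) ` {j. j < m \<and> j \<noteq> p}" by blast
  obtain j1 b1 where 1: "j1 < m" "j1 \<noteq> p" "1 \<le> b1" "b1 \<le> n" "w1 = ?T j1 b1"
    using SR_nbrs_unit_vertex[OF \<open>p < m\<close> nbr[OF w(1)]] by blast
  obtain j2 b2 where 2: "j2 < m" "j2 \<noteq> p" "1 \<le> b2" "b2 \<le> n" "w2 = ?T j2 b2"
    using SR_nbrs_unit_vertex[OF \<open>p < m\<close> nbr[OF w(3)]] by blast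
  have "j1 \<noteq> i" "b2 \<noteq> a" using 1 2 w by auto
  have "?T i a \<in> ?T i ` {1..n}" "?T i a \<in> (\<lambda>j. ?T j a) ` {j. j < m \<and> j \<noteq> p}"
    using i by auto
  then have "SR_adj m (?T i a) w1" "SR_adj m (?T i a) w2"
    using adj[OF v w(1)] adj[OF v w(3)] w by metis+
  then have "b1 = a" "j2 = i"
    using SR_adj_transfer_unit_vertex[OF i(1) 1(1) i(2) 1(2) i(3,4) 1(3,4) \<open>p < m\<close>]
      SR_adj_transfer_unit_vertex[OF i(1) 2(1) i(2) 2(2) i(3,4) 2(3,4) \<open>p < m\<close>]
      1(5) 2(5) \<open>j1 \<noteq> i\<close> \<open>b2 \<noteq> a\<close> by auto
  then have "SR_adj m w1 w2" using adj[OF w(1,3)] 1 w(4) by auto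
  then show False
    using SR_adj_transfer_unit_vertex[OF 1(1) 2(1) 1(2) 2(2) 1(3,4) 2(3,4) \<open>p < m\<close>]
      1(5) 2(5) \<open>j1 \<noteq> i\<close> \<open>b2 \<noteq> a\<close> \<open>b1 = a\<close> \<open>j2 = i\<close> by auto
qed

lemma card_max_cliques_containing_nbr_of_unit_vertex:
  assumes "p < m" and v: "v \<in> SR_nbrs m n (unit_vertex p n)"
  shows "card {C. is_max_clique_in (SR_adj m) (SR_nbrs m n (unit_vertex p n)) C \<and> v \<in> C} \<le> 2"
proof -
  let ?N = "SR_nbrs m n (unit_vertex p n)" and ?T = "transfer (unit_vertex p n) p"
  obtain i a where ia: "i < m" "i \<noteq> p" "1 \<le> a" "a \<le> n" "v = ?T i a"
    using SR_nbrs_unit_vertex[OF \<open>p < m\<close> v] by blast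
  define row where "row = ?T i ` {1..n}"
  define col where "col = (\<lambda>j. ?T j a) ` {j. j < m \<and> j \<noteq> p}"
  have nbr: "?T j b \<in> ?N" if "j < m" "j \<noteq> p" "1 \<le> b" "b \<le> n" for j b
    using transfer_in_SR_nbrs[OF unit_vertex_in_SR_verts[OF \<open>p < m\<close>]] that \<open>p < m\<close>
    by (simp add: unit_vertex_def)
  have row: "is_clique_in (SR_adj m) ?N row"
    using nbr ia by (auto simp: is_clique_in_def row_def
        SR_adj_transfer_unit_vertex[OF ia(1) ia(1) ia(2) ia(2) _ _ _ _ \<open>p < m\<close>])
  have col: "is_clique_in (SR_adj m) ?N col"
    using nbr ia by (auto simp: is_clique_in_def col_def
        SR_adj_transfer_unit_vertex[OF _ _ _ _ ia(3,4) ia(3,4) \<open>p < m\<close>])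
  have "{C. is_max_clique_in (SR_adj m) ?N C \<and> v \<in> C} \<subseteq> {row, col}"
  proof
    fix C assume "C \<in> {C. is_max_clique_in (SR_adj m) ?N C \<and> v \<in> C}"
    then have C: "is_max_clique_in (SR_adj m) ?N C" "v \<in> C" by auto
    then have "C \<subseteq> row \<or> C \<subseteq> col"
      using clique_through_transfer_unit_vertex[OF \<open>p < m\<close> ia(1-4), of C] ia(5)
      unfolding row_def col_def is_max_clique_in_def by blast
    then show "C \<in> {row, col}" using C row col unfolding is_max_clique_in_def by auto
  qed
  then have "card {C. is_max_clique_in (SR_adj m) ?N C \<and> v \<in> C} \<le> card {row, col}"
    by (rule card_mono[rotated]) simp
  also have "\<dots> \<le> 2" by (simp add: card_insert_if)
  finally show ?thesis .
qed

lemma three_le_card_max_cliques_in_SR_nbrs: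
  assumes "v \<in> SR_nbrs m n u" "x \<in> SR_nbrs m n u" "y \<in> SR_nbrs m n u" "z \<in> SR_nbrs m n u"
    and "SR_adj m v x \<and> v \<noteq> x" "SR_adj m v y \<and> v \<noteq> y" "SR_adj m v z \<and> v \<noteq> z"
    and "\<not> SR_adj m x y \<and> x \<noteq> y" "\<not> SR_adj m x z \<and> x \<noteq> z" "\<not> SR_adj m y z \<and> y \<noteq> z"
  shows "3 \<le> card {C. is_max_clique_in (SR_adj m) (SR_nbrs m n u) C \<and> v \<in> C}"
  by (rule three_le_card_max_cliques_containing[OF finite_SR_nbrs,
        where E = "SR_adj m" and v = v and x = x and y = y and z = z])
    (use assms SR_adj_commute in auto)

lemma nbr_in_three_max_cliques_if_three_coords:
  assumes "u \<in> SR_verts m n" and "i < m" "j < m" "l < m" "i \<noteq> j" "i \<noteq> l" "j \<noteq> l"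
    and "1 \<le> u i" "1 \<le> u j" "1 \<le> u l"
  shows "3 \<le> card {C. is_max_clique_in (SR_adj m) (SR_nbrs m n u) C \<and> transfer u j i 1 \<in> C}"
proof (rule three_le_card_max_cliques_in_SR_nbrs)
  show "transfer u j i 1 \<in> SR_nbrs m n u" "transfer u j l 1 \<in> SR_nbrs m n u"
    "transfer u l i 1 \<in> SR_nbrs m n u" "transfer u i j 1 \<in> SR_nbrs m n u"
    by (rule transfer_in_SR_nbrs; use assms in simp)+
  show "SR_adj m (transfer u j i 1) (transfer u j l 1) \<and> transfer u j i 1 \<noteq> transfer u j l 1"
    by (rule SR_adj_if_differ_at_two[of _ _ _ i l]) (use assms in \<open>auto simp: transfer_def\<close>)
  show "SR_adj m (transfer u j i 1) (transfer u l i 1) \<and> transfer u j i 1 \<noteq> transfer u l i 1"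
    by (rule SR_adj_if_differ_at_two[of _ _ _ j l]) (use assms in \<open>auto simp: transfer_def\<close>)
  show "SR_adj m (transfer u j i 1) (transfer u i j 1) \<and> transfer u j i 1 \<noteq> transfer u i j 1"
    by (rule SR_adj_if_differ_at_two[of _ _ _ i j]) (use assms in \<open>auto simp: transfer_def\<close>)
  show "\<not> SR_adj m (transfer u j l 1) (transfer u l i 1) \<and> transfer u j l 1 \<noteq> transfer u l i 1"
    "\<not> SR_adj m (transfer u j l 1) (transfer u i j 1) \<and> transfer u j l 1 \<noteq> transfer u i j 1"
    "\<not> SR_adj m (transfer u l i 1) (transfer u i j 1) \<and> transfer u l i 1 \<noteq> transfer u i j 1"
    by (rule not_SR_adj_if_differ_at_three[of _ _ _ i j l];
        use assms in \<open>auto simp: transfer_def\<close>)+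
qed

lemma nbr_in_three_max_cliques_if_double_coord:
  assumes "u \<in> SR_verts m n" and "i < m" "j < m" "l < m" "i \<noteq> j" "i \<noteq> l" "j \<noteq> l"
    and "2 \<le> u j" "1 \<le> u l"
  shows "3 \<le> card {C. is_max_clique_in (SR_adj m) (SR_nbrs m n u) C \<and> transfer u j i 1 \<in> C}"
proof (rule three_le_card_max_cliques_in_SR_nbrs)
  show "transfer u j i 1 \<in> SR_nbrs m n u" "transfer u j l 1 \<in> SR_nbrs m n u"
    "transfer u l i 1 \<in> SR_nbrs m n u" "transfer u j i 2 \<in> SR_nbrs m n u"
    by (rule transfer_in_SR_nbrs; use assms in simp)+
  show "SR_adj m (transfer u j i 1) (transfer u j l 1) \<and> transfer u j i 1 \<noteq> transfer u j l 1"
    by (rule SR_adj_if_differ_at_two[of _ _ _ i l]) (use assms in \<open>auto simp: transfer_def\<close>)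
  show "SR_adj m (transfer u j i 1) (transfer u l i 1) \<and> transfer u j i 1 \<noteq> transfer u l i 1"
    by (rule SR_adj_if_differ_at_two[of _ _ _ j l]) (use assms in \<open>auto simp: transfer_def\<close>)
  show "SR_adj m (transfer u j i 1) (transfer u j i 2) \<and> transfer u j i 1 \<noteq> transfer u j i 2"
    by (rule SR_adj_if_differ_at_two[of _ _ _ i j]) (use assms in \<open>auto simp: transfer_def\<close>)
  show "\<not> SR_adj m (transfer u j l 1) (transfer u l i 1) \<and> transfer u j l 1 \<noteq> transfer u l i 1"
    "\<not> SR_adj m (transfer u j l 1) (transfer u j i 2) \<and> transfer u j l 1 \<noteq> transfer u j i 2"
    "\<not> SR_adj m (transfer u l i 1) (transfer u j i 2) \<and> transfer u l i 1 \<noteq> transfer u j i 2"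
    by (rule not_SR_adj_if_differ_at_three[of _ _ _ i j l];
        use assms in \<open>auto simp: transfer_def\<close>)+
qed

lemma nbr_in_three_max_cliques_if_card_support_ne_1:
  assumes "m \<ge> 3" "n \<ge> 3" and u: "u \<in> SR_verts m n"
    and "card {i. i < m \<and> u i \<noteq> 0} \<noteq> 1"
  shows "\<exists>v\<in>SR_nbrs m n u. 3 \<le> card {C. is_max_clique_in (SR_adj m) (SR_nbrs m n u) C \<and> v \<in> C}"
proof -
  let ?S = "{i. i < m \<and> u i \<noteq> 0}"
  have u_sum: "(\<Sum>i<m. u i) = n" using u by (simp add: SR_verts_def)
  have "?S \<noteq> {}"
  proof
    assume "?S = {}"
    then have "(\<Sum>i<m. u i) = 0" by simp
    then show False using u_sum \<open>n \<ge> 3\<close> by simp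
  qed
  then obtain j where "j \<in> ?S" by blast
  moreover have "?S \<noteq> {j}" using \<open>card ?S \<noteq> 1\<close> by (metis card.empty card_insert_disjoint
        empty_iff finite.emptyI One_nat_def)
  ultimately obtain l where "j \<in> ?S" "l \<in> ?S" "j \<noteq> l" by blast
  then have jl: "j < m" "l < m" "1 \<le> u j" "1 \<le> u l" by auto
  show ?thesis
  proof (cases "\<exists>i\<in>?S. i \<noteq> j \<and> i \<noteq> l")
    case True
    then obtain i where "i \<in> ?S" "i \<noteq> j" "i \<noteq> l" by blast
    then have "i < m" "1 \<le> u i" by auto
    show ?thesis
    proof (rule bexI)
      show "transfer u j i 1 \<in> SR_nbrs m n u"
        by (rule transfer_in_SR_nbrs[OF u]) (use \<open>i < m\<close> \<open>i \<noteq> j\<close> jl in auto)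
      show "3 \<le> card {C. is_max_clique_in (SR_adj m) (SR_nbrs m n u) C \<and> transfer u j i 1 \<in> C}"
        by (rule nbr_in_three_max_cliques_if_three_coords[OF u, of i j l])
          (use \<open>i < m\<close> \<open>1 \<le> u i\<close> \<open>i \<noteq> j\<close> \<open>i \<noteq> l\<close> jl \<open>j \<noteq> l\<close> in auto)
    qed
  next
    case False
    then have zero: "u k = 0" if "k < m" "k \<noteq> j" "k \<noteq> l" for k using that by blast
    have "(\<Sum>k<m. u k) = (\<Sum>k\<in>{j, l}. u k)"
      by (rule sum.mono_neutral_right) (use jl zero in auto)
    then have "u j + u l = n" using u_sum \<open>j \<noteq> l\<close> by simp
    then have double: "2 \<le> u j \<or> 2 \<le> u l" using \<open>n \<ge> 3\<close> by linarith
    have "\<exists>i<3. i \<noteq> j \<and> i \<noteq> l" by presburger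
    then obtain i where "i < 3" and i: "i \<noteq> j" "i \<noteq> l" by blast
    with \<open>m \<ge> 3\<close> have "i < m" by linarith
    have "\<exists>v\<in>SR_nbrs m n u. 3 \<le> card {C. is_max_clique_in (SR_adj m) (SR_nbrs m n u) C \<and> v \<in> C}"
      if "2 \<le> u j'" "1 \<le> u l'" "j' < m" "l' < m" "j' \<noteq> l'" "i \<noteq> j'" "i \<noteq> l'" for j' l'
    proof (rule bexI)
      show "transfer u j' i 1 \<in> SR_nbrs m n u"
        by (rule transfer_in_SR_nbrs[OF u]) (use \<open>i < m\<close> i that in auto)
      show "3 \<le> card {C. is_max_clique_in (SR_adj m) (SR_nbrs m n u) C \<and> transfer u j' i 1 \<in> C}"
        by (rule nbr_in_three_max_cliques_if_double_coord[OF u, of i j' l'])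
          (use \<open>i < m\<close> i that in auto)
    qed
    then show ?thesis using double jl i \<open>j \<noteq> l\<close> by blast
  qed
qed

theorem lemma12:
  fixes m n :: nat and u :: "nat \<Rightarrow> nat"
  assumes "m \<ge> 3" and "n \<ge> 3" and "u \<in> SR_verts m n"
  shows "(\<forall>v \<in> SR_nbrs m n u.
            card {C. is_max_clique_in (SR_adj m) (SR_nbrs m n u) C \<and> v \<in> C} \<le> 2)
         \<longleftrightarrow> card {i. i < m \<and> u i \<noteq> 0} = 1"
proof
  assume "\<forall>v \<in> SR_nbrs m n u.
            card {C. is_max_clique_in (SR_adj m) (SR_nbrs m n u) C \<and> v \<in> C} \<le> 2"
  then show "card {i. i < m \<and> u i \<noteq> 0} = 1"
    using nbr_in_three_max_cliques_if_card_support_ne_1[OF assms] by fastforce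
next
  assume "card {i. i < m \<and> u i \<noteq> 0} = 1"
  then obtain p where "p < m" "u = unit_vertex p n"
    using card_support_eq_1_iff_unit_vertex[OF assms(3)] \<open>n \<ge> 3\<close> by auto
  then show "\<forall>v \<in> SR_nbrs m n u.
            card {C. is_max_clique_in (SR_adj m) (SR_nbrs m n u) C \<and> v \<in> C} \<le> 2"
    using card_max_cliques_containing_nbr_of_unit_vertex by blast
qed

end
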